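(* Let $\{X_t\}$ satisfy Assumption CEV with tail index $\alpha>0$ and conditional scaling exponents $\kappa_1,\dots,\kappa_h$, and suppose that the restriction of $\nu_h$ to $[1,\infty)\times\mathbb R^h$ is a probability measure. Let $(Y_0,\dots,Y_h)$ be a random vector with this distribution. Then $\mathbb P(Y_0>y)=y^{-\alpha}$ for $y\ge1$, and the random vector $(J_1,\dots,J_h):=(Y_0^{-\kappa_1}Y_1,\dots,Y_0^{-\kappa_h}Y_h)$ is independent of $Y_0$; consequently $(Y_0,Y_1,\dots,Y_h)\overset{d}{=}(Y_0,Y_0^{\kappa_1}J_1,\dots,Y_0^{\kappa_h}J_h)$ with $Y_0$ standard Pareto with index $\alpha$ independent of $(J_1,\dots,J_h)$.
   Context: Assumption CEV: $\{X_t\}_{t\in\mathbb Z}$ is a real-valued time series (not necessarily stationary). There exist positive scaling functions $b_j$, $j\ge1$, and, for each $h\ge1$, a nonzero Radon measure $\nu_h$ on $(0,\infty]\times[-\infty,\infty]^h$ such that $$\frac{1}{\mathbb P(X_0>x)}\,\mathbb P\Big(\Big(\frac{X_0}{x},\frac{X_1}{b_1(x)},\dots,\frac{X_h}{b_h(x)}\Big)\in\cdot\Big)\to\nu_h$$ vaguely on $(0,\infty]\times[-\infty,\infty]^h$ as $x\to\infty$ (relatively compact sets of this space are those whose points have first coordinate bounded below by some $\epsilon>0$), and for every $y_0>0$: (a) the measure $\nu_h([y_0,\infty]\times\cdot)$ on $\mathbb R^h$ is not concentrated on a line through infinity; (b) the measure $\nu_h([y_0,\infty]\times\cdot)$ on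 $\mathbb R^h$ is not concentrated on a hyperplane; (c) the measure $\nu_h(\cdot\times\mathbb R^h)$ on $(0,\infty]$ is not concentrated at $\{\infty\}$. Under this assumption $\mathbb P(X_0>x)$ is regularly varying with index $-\alpha$ for some $\alpha>0$, each $b_j$ is regularly varying with some index $\kappa_j\in\mathbb R$ (the lag-$j$ conditional scaling exponent), and $\nu_h((ty_0,\infty]\times\prod_i[-\infty,t^{\kappa_i}y_i])=t^{-\alpha}\nu_h((y_0,\infty]\times\prod_i[-\infty,y_i])$ for $t>0$. *)

theory Defs
  imports "HOL-Probability.Probability"
begin

text \<open>The space (0,\<infinity>] x [-\<infinity>,\<infinity>]^h, embedded in the Borel space of
  ereal x ({1..h} -> ereal); the measure nu_h lives on it (mass on first coordinate
  \<le> 0 is required to vanish in the statement).\<close>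
definition cev_space :: "nat \<Rightarrow> (ereal \<times> (nat \<Rightarrow> ereal)) measure" where
  "cev_space h = (borel :: ereal measure) \<Otimes>\<^sub>M PiM {1..h} (\<lambda>_. (borel :: ereal measure))"

definition cev_rect :: "nat \<Rightarrow> real \<Rightarrow> (nat \<Rightarrow> real) \<Rightarrow> (ereal \<times> (nat \<Rightarrow> ereal)) set" where
  "cev_rect h y0 y = {p \<in> space (cev_space h). ereal y0 < fst p \<and> (\<forall>i\<in>{1..h}. snd p i \<le> ereal (y i))}"

definition cev_unit_part :: "nat \<Rightarrow> (ereal \<times> (nat \<Rightarrow> ereal)) set" where
  "cev_unit_part h = {p \<in> space (cev_space h). 1 \<le> fst p \<and> fst p < \<infinity> \<and>
                        (\<forall>i\<in>{1..h}. \<bar>snd p i\<bar> < \<infinity>)}"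

definition cev_real :: "nat \<Rightarrow> ereal \<times> (nat \<Rightarrow> ereal) \<Rightarrow> real \<times> (nat \<Rightarrow> real)" where
  "cev_real h p = (real_of_ereal (fst p), \<lambda>i\<in>{1..h}. real_of_ereal (snd p i))"

definition real_vec_space :: "nat \<Rightarrow> (real \<times> (nat \<Rightarrow> real)) measure" where
  "real_vec_space h = (borel :: real measure) \<Otimes>\<^sub>M PiM {1..h} (\<lambda>_. (borel :: real measure))"

end

theory Submission
  imports Defs
begin

(*
  The scaling identity for \<nu> on the rectangles (y0,\<infinity>] x prod_i [-\<infinity>,y_i] extends, by uniqueness
  of measures on this Int-stable generator, to every measurable set A inside {y0 > c}:
  \<nu> A = t^(-\<alpha>) \<nu> (T_t^-1 A) with T_t (y0, y) = (t y0, (t^\<kappa>_i y_i)_i).  The map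
  J (y0, y) = (y0^(-\<kappa>_i) y_i)_i is invariant under T_t, hence
  \<nu> {y0 > s, J \<in> B} = s^(-\<alpha>) \<nu> {y0 > 1, J \<in> B}, which through the law of (Y0, ..., Yh) reads
  P (Y0 > s, J \<in> B) = s^(-\<alpha>) P (Y0 > 1, J \<in> B) for s \<ge> 1.  For s < 1 the unit part
  [1,\<infinity>) x \<real>^h lies in {y0 > s}, so letting s tend to 1 from below gives P (Y0 > 1) = 1.  This
  yields the Pareto tail and, since upper half-lines determine a law on \<real>, the independence
  of Y0 and J.
*)

lemma borel_measurable_ereal_le_real:
  fixes f :: "'a \<Rightarrow> ereal"
  assumes le: "\<And>r::real. {x \<in> space M. f x \<le> ereal r} \<in> sets M"
  shows "f \<in> borel_measurable M"
proof (rule borel_measurableI_le)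
  fix y :: ereal
  show "{x \<in> space M. f x \<le> y} \<in> sets M"
  proof (cases y)
    case MInf
    have "f x = -\<infinity>" if "\<forall>m::nat. f x \<le> ereal (- real m)" for x
    proof (cases "f x")
      case (real r)
      obtain m :: nat where "- r < real m" using reals_Archimedean2 by blast
      with that[rule_format, of m] real show ?thesis by simp
    qed (use that in auto)
    then have "{x \<in> space M. f x \<le> y} = (\<Inter>m::nat. {x \<in> space M. f x \<le> ereal (- real m)})"
      using MInf by force
    then show ?thesis using le by auto
  qed (use le in auto)
qed

lemma finite_ereal_bounded_by_nat:
  fixes f :: "'i \<Rightarrow> ereal"
  assumes "finite I" and "\<And>i. i \<in> I \<Longrightarrow> f i < \<infinity>"
  shows "\<exists>n::nat. \<forall>i\<in>I. f i \<le> ereal (real n)"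
  using assms
proof (induction I rule: finite_induct)
  case (insert i I)
  then obtain n :: nat where n: "\<forall>j\<in>I. f j \<le> ereal (real n)" by blast
  obtain m :: nat where m: "f i \<le> ereal (real m)"
  proof (cases "f i")
    case (real r)
    with real_arch_simple[of r] that show ?thesis by force
  qed (use insert.prems in auto)
  have "\<forall>j\<in>insert i I. f j \<le> ereal (real (max n m))"
    using n m by (auto intro: order.trans)
  then show ?case by blast
qed simp

lemma one_le_of_le_powr_mult:
  fixes \<alpha> p :: real
  assumes "\<And>s. 0 < s \<Longrightarrow> s < 1 \<Longrightarrow> 1 \<le> s powr (-\<alpha>) * p"
  shows "1 \<le> p"
proof -
  have "((\<lambda>s. s powr (-\<alpha>) * p) \<longlongrightarrow> 1 powr (-\<alpha>) * p) (at_left (1::real))"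
    by (intro tendsto_intros) auto
  moreover have "eventually (\<lambda>s. s \<in> {0<..<1}) (at_left (1::real))"
    by (rule eventually_at_left_real) simp
  then have "eventually (\<lambda>s. 1 \<le> s powr (-\<alpha>) * p) (at_left (1::real))"
    by eventually_elim (use assms in auto)
  ultimately show ?thesis
    by (intro tendsto_lowerbound[where F="at_left (1::real)"]) auto
qed

lemma (in prob_space) prob_vimage_Int_eq_mult_of_greaterThan:
  fixes X :: "'a \<Rightarrow> real"
  assumes X: "X \<in> borel_measurable M" and E: "E \<in> events"
    and tails: "\<And>x. prob {\<omega> \<in> space M. x < X \<omega> \<and> \<omega> \<in> E} = prob E * prob {\<omega> \<in> space M. x < X \<omega>}"
    and A: "A \<in> sets borel"
  shows "prob {\<omega> \<in> space M. X \<omega> \<in> A \<and> \<omega> \<in> E} = prob {\<omega> \<in> space M. X \<omega> \<in> A} * prob E"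
proof -
  have E_space: "E \<subseteq> space M" using E by (rule sets.sets_into_space)
  have emeasure_restrict: "emeasure (distr (restrict_space M E) borel X) C = emeasure M {\<omega> \<in> space M. X \<omega> \<in> C \<and> \<omega> \<in> E}"
    if "C \<in> sets borel" for C
  proof -
    have "emeasure (distr (restrict_space M E) borel X) C = emeasure (restrict_space M E) (X -` C \<inter> E)"
      using emeasure_distr[OF measurable_restrict_space1[OF X] that] E_space
      by (simp add: space_restrict_space Int_absorb2)
    also have "\<dots> = emeasure M (X -` C \<inter> E)"
      using E by (intro emeasure_restrict_space) auto
    also have "X -` C \<inter> E = {\<omega> \<in> space M. X \<omega> \<in> C \<and> \<omega> \<in> E}" using E_space by auto
    finally show ?thesis .
  qed
  have emeasure_distr_X: "emeasure (distr M borel X) C = prob {\<omega> \<in> space M. X \<omega> \<in> C}"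
    if "C \<in> sets borel" for C
  proof -
    have "X -` C \<inter> space M = {\<omega> \<in> space M. X \<omega> \<in> C}" by auto
    then show ?thesis using emeasure_distr[OF X that] by (simp add: emeasure_eq_measure)
  qed
  have "distr (restrict_space M E) borel X = scale_measure (prob E) (distr M borel X)"
  proof (rule measure_eqI_lessThan)
    show "emeasure (distr (restrict_space M E) borel X) {x<..} < \<infinity>" for x
      by (simp add: emeasure_restrict less_top[symmetric])
    show "emeasure (distr (restrict_space M E) borel X) {x<..}
        = emeasure (scale_measure (prob E) (distr M borel X)) {x<..}" for x
      using tails[of x] by (simp add: emeasure_restrict emeasure_distr_X emeasure_eq_measure ennreal_mult)
  qed simp_all
  then have "emeasure M {\<omega> \<in> space M. X \<omega> \<in> A \<and> \<omega> \<in> E} = ennreal (prob E * prob {\<omega> \<in> space M. X \<omega> \<in> A})"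
    using emeasure_restrict[OF A] emeasure_distr_X[OF A] by (simp add: ennreal_mult)
  then show ?thesis by (simp add: emeasure_eq_measure mult.commute)
qed

definition cev_above :: "nat \<Rightarrow> real \<Rightarrow> (ereal \<times> (nat \<Rightarrow> ereal)) set" where
  "cev_above h c = {p \<in> space (cev_space h). ereal c < fst p \<and> (\<forall>i\<in>{1..h}. snd p i < \<infinity>)}"

definition cev_rects :: "nat \<Rightarrow> real \<Rightarrow> (ereal \<times> (nat \<Rightarrow> ereal)) set set" where
  "cev_rects h c = {cev_rect h a b | a b. c \<le> a}"

lemma space_cev_space: "space (cev_space h) = UNIV \<times> (\<Pi>\<^sub>E i\<in>{1..h}. UNIV)"
  by (simp add: cev_space_def space_pair_measure space_PiM)

lemma cev_above_sets: "cev_above h c \<in> sets (cev_space h)"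
  unfolding cev_above_def cev_space_def by measurable

lemma cev_rect_sets: "cev_rect h a b \<in> sets (cev_space h)"
  unfolding cev_rect_def cev_space_def by measurable

lemma cev_rect_subset_cev_above: "c \<le> a \<Longrightarrow> cev_rect h a b \<subseteq> cev_above h c"
  unfolding cev_rect_def cev_above_def
  by (auto intro: le_less_trans[of _ "ereal a"] le_less_trans[of _ _ "\<infinity>"])

lemma cev_rects_subset: "cev_rects h c \<subseteq> Pow (cev_above h c)"
  unfolding cev_rects_def using cev_rect_subset_cev_above by blast

lemma cev_rect_Int:
  "cev_rect h a b \<inter> cev_rect h a' b' = cev_rect h (max a a') (\<lambda>i. min (b i) (b' i))"
proof -
  have "ereal (max a a') = max (ereal a) (ereal a')" and "\<And>x y. ereal (min x y) = min (ereal x) (ereal y)"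
    by (simp_all add: max_def min_def)
  then show ?thesis unfolding cev_rect_def by auto
qed

text \<open>Constraints on the coordinates outside \<open>K\<close> are released by letting their bounds tend to \<open>\<infinity>\<close>.\<close>
lemma UN_cev_rect_eq:
  assumes "c \<le> a" and "K \<subseteq> {1..h}"
  shows "(\<Union>n::nat. cev_rect h a (\<lambda>j. if j \<in> K then b j else real n))
       = {p \<in> cev_above h c. ereal a < fst p \<and> (\<forall>i\<in>K. snd p i \<le> ereal (b i))}"
proof (intro equalityI subsetI)
  fix p assume "p \<in> (\<Union>n::nat. cev_rect h a (\<lambda>j. if j \<in> K then b j else real n))"
  then obtain n :: nat where p: "p \<in> cev_rect h a (\<lambda>j. if j \<in> K then b j else real n)" by blast
  have "p \<in> cev_above h c" using p cev_rect_subset_cev_above[OF assms(1)] by blast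
  moreover have "ereal a < fst p" using p by (simp add: cev_rect_def)
  moreover have "snd p i \<le> ereal (b i)" if "i \<in> K" for i
  proof -
    have "i \<in> {1..h}" using that assms(2) by blast
    with p have "snd p i \<le> ereal (if i \<in> K then b i else real n)" unfolding cev_rect_def by blast
    with that show ?thesis by simp
  qed
  ultimately show "p \<in> {p \<in> cev_above h c. ereal a < fst p \<and> (\<forall>i\<in>K. snd p i \<le> ereal (b i))}"
    by blast
next
  fix p assume p: "p \<in> {p \<in> cev_above h c. ereal a < fst p \<and> (\<forall>i\<in>K. snd p i \<le> ereal (b i))}"
  then obtain n :: nat where "\<forall>i\<in>{1..h}. snd p i \<le> ereal (real n)"
    using finite_ereal_bounded_by_nat[of "{1..h}" "snd p"] by (auto simp: cev_above_def)
  with p have "p \<in> cev_rect h a (\<lambda>j. if j \<in> K then b j else real n)"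
    by (auto simp: cev_rect_def cev_above_def)
  then show "p \<in> (\<Union>n::nat. cev_rect h a (\<lambda>j. if j \<in> K then b j else real n))" by blast
qed

lemma UN_cev_rect_eq_cev_above: "(\<Union>n::nat. cev_rect h c (\<lambda>_. real n)) = cev_above h c"
  using UN_cev_rect_eq[of c c "{}" h] by (auto simp: cev_above_def)

lemma mem_cev_above_iff:
  "p \<in> cev_above h c \<longleftrightarrow> p \<in> space (cev_space h) \<and> ereal c < fst p \<and> (\<forall>i\<in>{1..h}. snd p i < \<infinity>)"
  by (simp add: cev_above_def)

lemma space_sigma_cev_rects: "space (sigma (cev_above h c) (cev_rects h c)) = cev_above h c"
  using cev_rects_subset by simp

lemma UN_cev_rect_in_sigma_cev_rects:
  assumes "c \<le> a"
  shows "(\<Union>n::nat. cev_rect h a (\<lambda>j. if j \<in> K then b j else real n)) \<in> sets (sigma (cev_above h c) (cev_rects h c))"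
proof (rule sets.countable_UN')
  have "cev_rect h a b' \<in> cev_rects h c" for b' using assms by (auto simp: cev_rects_def)
  then show "range (\<lambda>n::nat. cev_rect h a (\<lambda>j. if j \<in> K then b j else real n))
      \<subseteq> sets (sigma (cev_above h c) (cev_rects h c))"
    using cev_rects_subset by (auto intro: sigma_sets.Basic)
qed simp

lemma borel_measurable_fst_sigma_cev_rects: "fst \<in> borel_measurable (sigma (cev_above h c) (cev_rects h c))"
proof (rule borel_measurable_ereal_le_real)
  fix r
  let ?M = "sigma (cev_above h c) (cev_rects h c)"
  have "ereal (max r c) = max (ereal r) (ereal c)" by (simp add: max_def)
  then have "{p \<in> space ?M. fst p \<le> ereal r}
      = space ?M - {p \<in> cev_above h c. ereal (max r c) < fst p \<and> (\<forall>i\<in>{}. snd p i \<le> ereal 0)}"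
    unfolding space_sigma_cev_rects by (auto simp: mem_cev_above_iff not_less)
  then show "{p \<in> space ?M. fst p \<le> ereal r} \<in> sets ?M"
    using UN_cev_rect_in_sigma_cev_rects[of c "max r c" h "{}"] UN_cev_rect_eq[of c "max r c" "{}" h "\<lambda>_. 0"]
    by (simp add: sets.Diff)
qed

lemma borel_measurable_snd_sigma_cev_rects:
  assumes "i \<in> {1..h}"
  shows "(\<lambda>p. snd p i) \<in> borel_measurable (sigma (cev_above h c) (cev_rects h c))"
proof (rule borel_measurable_ereal_le_real)
  fix r
  let ?M = "sigma (cev_above h c) (cev_rects h c)"
  have "{p \<in> space ?M. snd p i \<le> ereal r}
      = {p \<in> cev_above h c. ereal c < fst p \<and> (\<forall>i\<in>{i}. snd p i \<le> ereal r)}"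
    unfolding space_sigma_cev_rects by (auto simp: mem_cev_above_iff)
  then show "{p \<in> space ?M. snd p i \<le> ereal r} \<in> sets ?M"
    using UN_cev_rect_in_sigma_cev_rects[of c c h "{i}" "\<lambda>_. r"] UN_cev_rect_eq[of c c "{i}" h "\<lambda>_. r"] assms
    by simp
qed

lemma measurable_id_sigma_cev_rects:
  "(\<lambda>p. p) \<in> measurable (sigma (cev_above h c) (cev_rects h c)) (cev_space h)"
proof -
  let ?M = "sigma (cev_above h c) (cev_rects h c)"
  have "snd p \<in> (\<Pi>\<^sub>E i\<in>{1..h}. space borel)" if "p \<in> space ?M" for p
    using that unfolding space_sigma_cev_rects mem_cev_above_iff space_cev_space by auto
  with borel_measurable_snd_sigma_cev_rects
  have "snd \<in> measurable ?M (PiM {1..h} (\<lambda>_. borel))"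
    by (intro measurable_PiM_single') auto
  with borel_measurable_fst_sigma_cev_rects
  have "(\<lambda>p. (fst p, snd p)) \<in> measurable ?M (borel \<Otimes>\<^sub>M PiM {1..h} (\<lambda>_. borel))"
    by (rule measurable_Pair)
  then show ?thesis unfolding cev_space_def by simp
qed

lemma sets_restrict_cev_above:
  "sets (restrict_space (cev_space h) (cev_above h c)) = sigma_sets (cev_above h c) (cev_rects h c)"
proof
  let ?R = "restrict_space (cev_space h) (cev_above h c)"
  have space_R: "space ?R = cev_above h c"
    using cev_above_sets by (rule space_restrict_space2)
  have "(\<lambda>p. p) \<in> measurable (sigma (cev_above h c) (cev_rects h c)) ?R"
    using measurable_id_sigma_cev_rects cev_rects_subset
    by (intro measurable_restrict_space2) auto
  from measurable_sets[OF this] show "sets ?R \<subseteq> sigma_sets (cev_above h c) (cev_rects h c)"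
    using cev_rects_subset sets.sets_into_space[of _ ?R] unfolding space_R
    by (auto simp: Int_absorb2)
next
  have "cev_rects h c \<subseteq> sets (restrict_space (cev_space h) (cev_above h c))"
    using cev_rect_subset_cev_above cev_rect_sets cev_above_sets
    by (auto simp: cev_rects_def sets_restrict_space_iff)
  then show "sigma_sets (cev_above h c) (cev_rects h c) \<subseteq> sets (restrict_space (cev_space h) (cev_above h c))"
    using sets.top[of "restrict_space (cev_space h) (cev_above h c)"]
    by (intro sets.sigma_sets_subset') (simp_all add: space_restrict_space2[OF cev_above_sets])
qed

lemma Int_stable_cev_rects: "Int_stable (cev_rects h c)"
proof (rule Int_stableI)
  fix X Y assume "X \<in> cev_rects h c" "Y \<in> cev_rects h c"
  then obtain a b a' b' where "X = cev_rect h a b" "Y = cev_rect h a' b'" "c \<le> a"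
    by (auto simp: cev_rects_def)
  then have "X \<inter> Y = cev_rect h (max a a') (\<lambda>i. min (b i) (b' i))" "c \<le> max a a'"
    by (auto simp: cev_rect_Int)
  then show "X \<inter> Y \<in> cev_rects h c" unfolding cev_rects_def by blast
qed

definition cev_scale ::
    "nat \<Rightarrow> (nat \<Rightarrow> real) \<Rightarrow> real \<Rightarrow> ereal \<times> (nat \<Rightarrow> ereal) \<Rightarrow> ereal \<times> (nat \<Rightarrow> ereal)" where
  "cev_scale h \<kappa> t p = (ereal t * fst p, \<lambda>i\<in>{1..h}. ereal (t powr \<kappa> i) * snd p i)"

lemma measurable_cev_scale: "cev_scale h \<kappa> t \<in> measurable (cev_space h) (cev_space h)"
  unfolding cev_scale_def cev_space_def by measurable

lemma cev_scale_in_space: "cev_scale h \<kappa> t p \<in> space (cev_space h)"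
  unfolding cev_scale_def space_cev_space by simp

lemma ereal_less_pos_mult_iff: "t > 0 \<Longrightarrow> ereal a < ereal t * x \<longleftrightarrow> ereal (a / t) < x"
  by (cases x) (auto simp: pos_divide_less_eq mult.commute)

lemma ereal_pos_mult_le_iff: "t > 0 \<Longrightarrow> ereal t * x \<le> ereal b \<longleftrightarrow> x \<le> ereal (b / t)"
  by (cases x) (auto simp: pos_le_divide_eq mult.commute)

lemma ereal_pos_mult_less_PInf_iff: "t > 0 \<Longrightarrow> ereal t * x < \<infinity> \<longleftrightarrow> x < \<infinity>"
  by (cases x) auto

lemma cev_scale_cev_above:
  assumes "t > 0" and "p \<in> cev_above h (c / t)"
  shows "cev_scale h \<kappa> t p \<in> cev_above h c"
  using assms ereal_less_pos_mult_iff[OF assms(1)] ereal_pos_mult_less_PInf_iff[of "t powr \<kappa> i" for i]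
  by (simp add: cev_above_def cev_scale_def space_cev_space)

lemma vimage_cev_scale_cev_rect:
  assumes t: "t > 0" and "c \<le> a"
  shows "cev_scale h \<kappa> t -` cev_rect h a b \<inter> cev_above h (c / t)
       = cev_rect h (a / t) (\<lambda>i. b i / t powr \<kappa> i)"
proof -
  have "cev_scale h \<kappa> t p \<in> cev_rect h a b \<longleftrightarrow> p \<in> cev_rect h (a / t) (\<lambda>i. b i / t powr \<kappa> i)"
    if "p \<in> space (cev_space h)" for p
    using that cev_scale_in_space[of h \<kappa> t p] ereal_less_pos_mult_iff[OF t]
      ereal_pos_mult_le_iff[of "t powr \<kappa> i" for i] t
    by (simp add: cev_rect_def cev_scale_def)
  moreover have "cev_rect h (a / t) (\<lambda>i. b i / t powr \<kappa> i) \<subseteq> cev_above h (c / t)"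
    using assms by (intro cev_rect_subset_cev_above divide_right_mono) auto
  ultimately show ?thesis
    by (auto simp: cev_above_def cev_rect_def)
qed

definition cev_J :: "nat \<Rightarrow> (nat \<Rightarrow> real) \<Rightarrow> real \<times> (nat \<Rightarrow> real) \<Rightarrow> nat \<Rightarrow> real" where
  "cev_J h \<kappa> q = (\<lambda>i\<in>{1..h}. fst q powr (-\<kappa> i) * snd q i)"

definition cev_finite :: "nat \<Rightarrow> ereal \<times> (nat \<Rightarrow> ereal) \<Rightarrow> bool" where
  "cev_finite h p \<longleftrightarrow> fst p < \<infinity> \<and> (\<forall>i\<in>{1..h}. \<bar>snd p i\<bar> < \<infinity>)"

definition cev_polar ::
    "nat \<Rightarrow> (nat \<Rightarrow> real) \<Rightarrow> real \<Rightarrow> (nat \<Rightarrow> real) set \<Rightarrow> (ereal \<times> (nat \<Rightarrow> ereal)) set" where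
  "cev_polar h \<kappa> s B =
    {p \<in> space (cev_space h). ereal s < fst p \<and> cev_finite h p \<and> cev_J h \<kappa> (cev_real h p) \<in> B}"

lemma measurable_cev_J:
  "cev_J h \<kappa> \<in> measurable (real_vec_space h) (PiM {1..h} (\<lambda>_. borel))"
  unfolding cev_J_def real_vec_space_def by measurable

lemma cev_polar_sets:
  assumes "B \<in> sets (PiM {1..h} (\<lambda>_. borel))"
  shows "cev_polar h \<kappa> s B \<in> sets (cev_space h)"
proof -
  have "cev_real h \<in> measurable (cev_space h) (real_vec_space h)"
    unfolding cev_real_def cev_space_def real_vec_space_def by measurable
  with measurable_cev_J have J: "(\<lambda>p. cev_J h \<kappa> (cev_real h p)) \<in> measurable (cev_space h) (PiM {1..h} (\<lambda>_. borel))"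
    by (simp add: measurable_comp[unfolded comp_def])
  have "{p \<in> space (cev_space h). ereal s < fst p \<and> cev_finite h p} \<in> sets (cev_space h)"
    unfolding cev_finite_def cev_space_def by measurable
  moreover have "cev_polar h \<kappa> s B
      = {p \<in> space (cev_space h). ereal s < fst p \<and> cev_finite h p} \<inter> ((\<lambda>p. cev_J h \<kappa> (cev_real h p)) -` B \<inter> space (cev_space h))"
    unfolding cev_polar_def by auto
  ultimately show ?thesis
    using measurable_sets[OF J assms] by simp
qed

lemma cev_unit_part_sets: "cev_unit_part h \<in> sets (cev_space h)"
  unfolding cev_unit_part_def cev_space_def by measurable

lemma cev_polar_subset_cev_above: "cev_polar h \<kappa> s B \<subseteq> cev_above h s"
  unfolding cev_polar_def cev_above_def cev_finite_def by auto

lemma cev_finite_cev_scale: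
  assumes "t > 0"
  shows "cev_finite h (cev_scale h \<kappa> t p) \<longleftrightarrow> cev_finite h p"
proof -
  have "\<bar>ereal u * x\<bar> < \<infinity> \<longleftrightarrow> \<bar>x\<bar> < \<infinity>" if "u > 0" for u :: real and x
    using that by (cases x) auto
  with assms show ?thesis
    by (simp add: cev_finite_def cev_scale_def ereal_pos_mult_less_PInf_iff)
qed

lemma cev_J_cev_real_cev_scale:
  assumes "t > 0" and "fst p = ereal x" and "x > 0"
  shows "cev_J h \<kappa> (cev_real h (cev_scale h \<kappa> t p)) = cev_J h \<kappa> (cev_real h p)"
proof -
  have eq: "(t * x) powr (-\<kappa> i) * t powr \<kappa> i = x powr (-\<kappa> i)" for i
    using assms by (simp add: powr_mult powr_minus field_simps)
  show ?thesis
    unfolding cev_J_def cev_real_def cev_scale_def using assms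
    by (intro restrict_ext) (simp add: real_of_ereal_mult mult.assoc[symmetric] eq)
qed

lemma vimage_cev_scale_cev_polar:
  assumes s: "s > 0"
  shows "cev_scale h \<kappa> s -` cev_polar h \<kappa> s B \<inter> cev_above h 1 = cev_polar h \<kappa> 1 B"
proof -
  have "cev_scale h \<kappa> s p \<in> cev_polar h \<kappa> s B \<longleftrightarrow> p \<in> cev_polar h \<kappa> 1 B"
    if p: "p \<in> cev_above h 1" for p
  proof (cases "cev_finite h p")
    case True
    then obtain x where x: "fst p = ereal x" "x > 1"
      using p by (cases "fst p") (auto simp: cev_finite_def cev_above_def)
    have "fst (cev_scale h \<kappa> s p) = ereal (s * x)" using x by (simp add: cev_scale_def)
    moreover have "ereal s < ereal (s * x)" using s x by simp
    ultimately show ?thesis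
      using p x cev_J_cev_real_cev_scale[OF s x(1)] cev_finite_cev_scale[OF s] cev_scale_in_space
      by (simp add: cev_polar_def cev_above_def)
  qed (use cev_finite_cev_scale[OF s] in \<open>simp add: cev_polar_def\<close>)
  then show ?thesis
    using cev_polar_subset_cev_above[of h \<kappa> 1 B] by blast
qed

lemma cev_unit_part_cev_polar:
  assumes "s \<ge> 1"
  shows "{p \<in> cev_unit_part h. cev_real h p \<in> {q \<in> space (real_vec_space h). s < fst q \<and> cev_J h \<kappa> q \<in> B}}
       = cev_polar h \<kappa> s B"
proof -
  have key: "p \<in> cev_unit_part h \<and> s < real_of_ereal (fst p)
      \<longleftrightarrow> p \<in> space (cev_space h) \<and> ereal s < fst p \<and> cev_finite h p" for p
  proof (cases "fst p")
    case (real r)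
    with assms show ?thesis unfolding cev_unit_part_def cev_finite_def by simp linarith
  qed (simp_all add: cev_unit_part_def cev_finite_def)
  have real: "cev_real h p \<in> space (real_vec_space h)" "fst (cev_real h p) = real_of_ereal (fst p)" for p
    by (simp_all add: cev_real_def real_vec_space_def space_pair_measure space_PiM)
  have "p \<in> cev_unit_part h \<and> cev_real h p \<in> {q \<in> space (real_vec_space h). s < fst q \<and> cev_J h \<kappa> q \<in> B}
      \<longleftrightarrow> p \<in> cev_polar h \<kappa> s B" for p
    unfolding cev_polar_def mem_Collect_eq real(2) using key[of p] real(1)[of p] by blast
  then show ?thesis by (intro set_eqI) simp
qed

lemma cev_unit_part_subset_cev_polar:
  assumes "s < 1"
  shows "cev_unit_part h \<subseteq> cev_polar h \<kappa> s (space (PiM {1..h} (\<lambda>_. borel)))"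
proof
  fix p assume "p \<in> cev_unit_part h"
  then have "p \<in> space (cev_space h)" "1 \<le> fst p" "cev_finite h p"
    by (auto simp: cev_unit_part_def cev_finite_def)
  moreover have "ereal s < fst p"
    using assms \<open>1 \<le> fst p\<close> by (metis ereal_less(3) less_le_trans one_ereal_def)
  moreover have "cev_J h \<kappa> q \<in> space (PiM {1..h} (\<lambda>_. borel))" for q
    by (simp add: cev_J_def space_PiM)
  ultimately show "p \<in> cev_polar h \<kappa> s (space (PiM {1..h} (\<lambda>_. borel)))"
    by (simp add: cev_polar_def)
qed

locale homogeneous_cev_measure =
  fixes h :: nat and \<alpha> :: real and \<kappa> :: "nat \<Rightarrow> real"
    and \<nu> :: "(ereal \<times> (nat \<Rightarrow> ereal)) measure"
  assumes sets_nu: "sets \<nu> = sets (cev_space h)"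
    and emeasure_nu_fst_ge: "\<And>\<epsilon>. \<epsilon> > 0 \<Longrightarrow> emeasure \<nu> {p \<in> space \<nu>. ereal \<epsilon> \<le> fst p} < \<infinity>"
    and emeasure_nu_cev_rect_scale: "\<And>t y0 y. t > 0 \<Longrightarrow> y0 > 0 \<Longrightarrow>
        emeasure \<nu> (cev_rect h (t * y0) (\<lambda>i. t powr \<kappa> i * y i))
          = ennreal (t powr (-\<alpha>)) * emeasure \<nu> (cev_rect h y0 y)"
begin

lemma space_nu: "space \<nu> = space (cev_space h)"
  using sets_nu by (rule sets_eq_imp_space_eq)

lemma emeasure_nu_fst_greater_finite:
  assumes "\<epsilon> > 0" and "A \<in> sets \<nu>" and "\<And>p. p \<in> A \<Longrightarrow> ereal \<epsilon> < fst p"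
  shows "emeasure \<nu> A < \<infinity>"
proof -
  have "{p \<in> space (cev_space h). ereal \<epsilon> \<le> fst p} \<in> sets (cev_space h)"
    unfolding cev_space_def by measurable
  then have "emeasure \<nu> A \<le> emeasure \<nu> {p \<in> space \<nu>. ereal \<epsilon> \<le> fst p}"
    using assms sets.sets_into_space[OF assms(2)]
    by (intro emeasure_mono) (auto simp: sets_nu space_nu less_imp_le)
  also have "\<dots> < \<infinity>" using emeasure_nu_fst_ge assms(1) .
  finally show ?thesis .
qed

lemma emeasure_restrict_nu_cev_above:
  "X \<subseteq> cev_above h c \<Longrightarrow> emeasure (restrict_space \<nu> (cev_above h c)) X = emeasure \<nu> X"
  using cev_above_sets by (intro emeasure_restrict_space) (auto simp: sets_nu space_nu cev_above_def)

lemma measurable_cev_scale_restrict: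
  assumes "t > 0"
  shows "cev_scale h \<kappa> t \<in> measurable (restrict_space \<nu> (cev_above h (c / t))) (restrict_space (cev_space h) (cev_above h c))"
proof (rule measurable_restrict_space2)
  show "cev_scale h \<kappa> t \<in> space (restrict_space \<nu> (cev_above h (c / t))) \<rightarrow> cev_above h c"
    using cev_scale_cev_above[OF assms] by (auto simp: space_restrict_space)
  show "cev_scale h \<kappa> t \<in> measurable (restrict_space \<nu> (cev_above h (c / t))) (cev_space h)"
    using measurable_cev_scale
    by (auto intro: measurable_restrict_space1 simp: measurable_cong_sets[OF sets_nu refl])
qed

lemma emeasure_distr_cev_scale:
  assumes "t > 0" and "X \<in> sets (restrict_space (cev_space h) (cev_above h c))"
  shows "emeasure (distr (restrict_space \<nu> (cev_above h (c / t))) (restrict_space (cev_space h) (cev_above h c))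
      (cev_scale h \<kappa> t)) X = emeasure \<nu> (cev_scale h \<kappa> t -` X \<inter> cev_above h (c / t))"
proof -
  have "space (restrict_space \<nu> (cev_above h (c / t))) = cev_above h (c / t)"
    using cev_above_sets by (auto simp: space_restrict_space space_nu cev_above_def)
  then show ?thesis
    using emeasure_distr[OF measurable_cev_scale_restrict[OF assms(1)] assms(2)]
    by (simp add: emeasure_restrict_nu_cev_above)
qed

lemma emeasure_nu_cev_rects_vimage_cev_scale:
  assumes t: "t > 0" and c: "c > 0" and X: "X \<in> cev_rects h c"
  shows "emeasure \<nu> X = ennreal (t powr (-\<alpha>)) * emeasure \<nu> (cev_scale h \<kappa> t -` X \<inter> cev_above h (c / t))"
proof -
  obtain a b where X_eq: "X = cev_rect h a b" and a: "c \<le> a" using X by (auto simp: cev_rects_def)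
  have "emeasure \<nu> X = emeasure \<nu> (cev_rect h (t * (a / t)) (\<lambda>i. t powr \<kappa> i * (b i / t powr \<kappa> i)))"
    using X_eq t by simp
  also have "\<dots> = ennreal (t powr (-\<alpha>)) * emeasure \<nu> (cev_rect h (a / t) (\<lambda>i. b i / t powr \<kappa> i))"
    using a c t by (intro emeasure_nu_cev_rect_scale) auto
  finally show ?thesis
    using vimage_cev_scale_cev_rect[OF t a] X_eq by simp
qed

lemma emeasure_nu_vimage_cev_scale:
  assumes t: "t > 0" and c: "c > 0"
    and A: "A \<in> sets (cev_space h)" "A \<subseteq> cev_above h c"
  shows "emeasure \<nu> A = ennreal (t powr (-\<alpha>)) * emeasure \<nu> (cev_scale h \<kappa> t -` A \<inter> cev_above h (c / t))"
proof -
  let ?R = "restrict_space (cev_space h) (cev_above h c)"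
  let ?T = "cev_scale h \<kappa> t"
  define N where
    "N = scale_measure (ennreal (t powr (-\<alpha>))) (distr (restrict_space \<nu> (cev_above h (c / t))) ?R ?T)"
  have emeasure_N: "emeasure N X = ennreal (t powr (-\<alpha>)) * emeasure \<nu> (?T -` X \<inter> cev_above h (c / t))"
    if "X \<in> sets ?R" for X
    using emeasure_distr_cev_scale[OF t that] by (simp add: N_def)
  have "restrict_space \<nu> (cev_above h c) = N"
  proof (rule measure_eqI_generator_eq[OF Int_stable_cev_rects cev_rects_subset,
        where A="\<lambda>n. cev_rect h c (\<lambda>_. real n)"])
    show "sets (restrict_space \<nu> (cev_above h c)) = sigma_sets (cev_above h c) (cev_rects h c)"
      using sets_restrict_cev_above by (simp add: sets_restrict_space sets_nu)
    show "sets N = sigma_sets (cev_above h c) (cev_rects h c)"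
      using sets_restrict_cev_above by (simp add: N_def)
    show "range (\<lambda>n. cev_rect h c (\<lambda>_. real n)) \<subseteq> cev_rects h c"
      by (auto simp: cev_rects_def)
    show "(\<Union>n. cev_rect h c (\<lambda>_. real n)) = cev_above h c"
      by (rule UN_cev_rect_eq_cev_above)
    show "emeasure (restrict_space \<nu> (cev_above h c)) (cev_rect h c (\<lambda>_. real n)) \<noteq> \<infinity>" for n
    proof -
      have "emeasure \<nu> (cev_rect h c (\<lambda>_. real n)) < \<infinity>"
        using cev_rect_sets by (rule emeasure_nu_fst_greater_finite[OF c, unfolded sets_nu])
          (simp add: cev_rect_def)
      then show ?thesis using cev_rect_subset_cev_above[of c c] by (simp add: emeasure_restrict_nu_cev_above)
    qed
  next
    fix X assume X: "X \<in> cev_rects h c"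
    then have "X \<in> sets ?R" and "X \<subseteq> cev_above h c"
      using sets_restrict_cev_above cev_rects_subset by blast+
    then show "emeasure (restrict_space \<nu> (cev_above h c)) X = emeasure N X"
      using emeasure_nu_cev_rects_vimage_cev_scale[OF t c X] emeasure_N
      by (simp add: emeasure_restrict_nu_cev_above)
  qed
  then show ?thesis
    using emeasure_restrict_nu_cev_above[OF A(2)] emeasure_N A cev_above_sets
    by (simp add: sets_restrict_space_iff)
qed

lemma emeasure_cev_polar:
  assumes "s > 0" and "B \<in> sets (PiM {1..h} (\<lambda>_. borel))"
  shows "emeasure \<nu> (cev_polar h \<kappa> s B) = ennreal (s powr (-\<alpha>)) * emeasure \<nu> (cev_polar h \<kappa> 1 B)"
  using emeasure_nu_vimage_cev_scale[OF assms(1,1) cev_polar_sets[OF assms(2)] cev_polar_subset_cev_above]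
    vimage_cev_scale_cev_polar[OF assms(1)] assms(1)
  by simp

lemma emeasure_cev_polar_finite: "s > 0 \<Longrightarrow> B \<in> sets (PiM {1..h} (\<lambda>_. borel)) \<Longrightarrow> emeasure \<nu> (cev_polar h \<kappa> s B) < \<infinity>"
  using cev_polar_sets[of B h \<kappa> s] unfolding sets_nu[symmetric]
  by (intro emeasure_nu_fst_greater_finite) (auto simp: cev_polar_def)

lemma measure_cev_polar:
  assumes "s > 0" and "B \<in> sets (PiM {1..h} (\<lambda>_. borel))"
  shows "measure \<nu> (cev_polar h \<kappa> s B) = s powr (-\<alpha>) * measure \<nu> (cev_polar h \<kappa> 1 B)"
  using emeasure_cev_polar[OF assms] by (simp add: measure_def enn2real_mult)

end

locale cev_spectral_vector = homogeneous_cev_measure h \<alpha> \<kappa> \<nu> + P: prob_space P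
  for h \<alpha> \<kappa> \<nu> and P :: "'a measure" +
  fixes Y0 :: "'a \<Rightarrow> real" and Y :: "nat \<Rightarrow> 'a \<Rightarrow> real"
  assumes emeasure_nu_cev_unit_part: "emeasure \<nu> (cev_unit_part h) = 1"
    and measurable_Y0: "Y0 \<in> borel_measurable P"
    and measurable_Y: "\<And>i. i \<in> {1..h} \<Longrightarrow> Y i \<in> borel_measurable P"
    and distr_Y: "\<And>A. A \<in> sets (real_vec_space h) \<Longrightarrow>
        emeasure P {\<omega> \<in> space P. (Y0 \<omega>, \<lambda>i\<in>{1..h}. Y i \<omega>) \<in> A}
          = emeasure \<nu> {p \<in> cev_unit_part h. cev_real h p \<in> A}"
begin

definition J :: "'a \<Rightarrow> nat \<Rightarrow> real" where
  "J \<omega> = (\<lambda>i\<in>{1..h}. Y0 \<omega> powr (-\<kappa> i) * Y i \<omega>)"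

lemma measurable_vector: "(\<lambda>\<omega>. (Y0 \<omega>, \<lambda>i\<in>{1..h}. Y i \<omega>)) \<in> measurable P (real_vec_space h)"
  unfolding real_vec_space_def
  using measurable_Y0 measurable_restrict[OF measurable_Y] by (rule measurable_Pair)

lemma J_eq_cev_J: "J \<omega> = cev_J h \<kappa> (Y0 \<omega>, \<lambda>i\<in>{1..h}. Y i \<omega>)"
  unfolding J_def cev_J_def by (intro restrict_ext) simp

lemma measurable_J: "J \<in> measurable P (PiM {1..h} (\<lambda>_. borel))"
  using measurable_comp[OF measurable_vector measurable_cev_J] by (simp add: comp_def J_eq_cev_J[abs_def])

lemma J_space: "J \<omega> \<in> space (PiM {1..h} (\<lambda>_. borel))"
  by (simp add: J_def space_PiM)

lemma events_Y0_greater_J: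
  assumes "B \<in> sets (PiM {1..h} (\<lambda>_. borel))"
  shows "{\<omega> \<in> space P. s < Y0 \<omega> \<and> J \<omega> \<in> B} \<in> P.events"
proof -
  have "{\<omega> \<in> space P. s < Y0 \<omega> \<and> J \<omega> \<in> B} = (Y0 -` {s<..} \<inter> space P) \<inter> (J -` B \<inter> space P)"
    by auto
  then show ?thesis
    using measurable_sets[OF measurable_Y0, of "{s<..}"] measurable_sets[OF measurable_J assms] by simp
qed

lemma prob_Y0_greater_J:
  assumes "s \<ge> 1" and B: "B \<in> sets (PiM {1..h} (\<lambda>_. borel))"
  shows "P.prob {\<omega> \<in> space P. s < Y0 \<omega> \<and> J \<omega> \<in> B} = measure \<nu> (cev_polar h \<kappa> s B)"
proof -
  let ?A = "{q \<in> space (real_vec_space h). s < fst q \<and> cev_J h \<kappa> q \<in> B}"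
  have "?A = (fst -` {s<..} \<inter> space (real_vec_space h)) \<inter> (cev_J h \<kappa> -` B \<inter> space (real_vec_space h))"
    by auto
  also have "\<dots> \<in> sets (real_vec_space h)"
    using measurable_sets[OF measurable_fst, of "{s<..}" borel] measurable_sets[OF measurable_cev_J B]
    by (simp add: real_vec_space_def)
  finally have A: "?A \<in> sets (real_vec_space h)" .
  have "emeasure P {\<omega> \<in> space P. (Y0 \<omega>, \<lambda>i\<in>{1..h}. Y i \<omega>) \<in> ?A} = emeasure \<nu> (cev_polar h \<kappa> s B)"
    using distr_Y[OF A] unfolding cev_unit_part_cev_polar[OF assms(1)] .
  moreover have "{\<omega> \<in> space P. (Y0 \<omega>, \<lambda>i\<in>{1..h}. Y i \<omega>) \<in> ?A} = {\<omega> \<in> space P. s < Y0 \<omega> \<and> J \<omega> \<in> B}"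
    using measurable_space[OF measurable_vector] by (auto simp: J_eq_cev_J)
  ultimately show ?thesis by (simp add: measure_def)
qed

lemma prob_Y0_greater_1: "P.prob {\<omega> \<in> space P. 1 < Y0 \<omega>} = 1"
proof (rule antisym)
  let ?U = "space (PiM {1..h} (\<lambda>_. borel :: real measure))"
  have "P.prob {\<omega> \<in> space P. 1 < Y0 \<omega>} = measure \<nu> (cev_polar h \<kappa> 1 ?U)"
    using prob_Y0_greater_J[of 1 ?U] J_space by simp
  moreover have "1 \<le> s powr (-\<alpha>) * measure \<nu> (cev_polar h \<kappa> 1 ?U)" if "0 < s" "s < 1" for s
  proof -
    have "1 = measure \<nu> (cev_unit_part h)"
      using emeasure_nu_cev_unit_part by (simp add: measure_def)
    also have "\<dots> \<le> measure \<nu> (cev_polar h \<kappa> s ?U)"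
      using cev_unit_part_subset_cev_polar[OF that(2)] emeasure_cev_polar_finite[OF that(1)]
        cev_polar_sets[of ?U h \<kappa> s] cev_unit_part_sets
      by (intro measure_mono_fmeasurable) (auto simp: fmeasurable_def sets_nu)
    also have "\<dots> = s powr (-\<alpha>) * measure \<nu> (cev_polar h \<kappa> 1 ?U)"
      using that by (intro measure_cev_polar) auto
    finally show ?thesis .
  qed
  ultimately show "1 \<le> P.prob {\<omega> \<in> space P. 1 < Y0 \<omega>}"
    using one_le_of_le_powr_mult[of \<alpha> "measure \<nu> (cev_polar h \<kappa> 1 ?U)"] by simp
qed simp

lemma AE_Y0_greater_1: "AE \<omega> in P. 1 < Y0 \<omega>"
  using P.AE_prob_1[OF prob_Y0_greater_1] by eventually_elim auto

lemma prob_Y0_greater_J_eq_mult: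
  assumes "s \<ge> 1" and B: "B \<in> sets (PiM {1..h} (\<lambda>_. borel))"
  shows "P.prob {\<omega> \<in> space P. s < Y0 \<omega> \<and> J \<omega> \<in> B} = s powr (-\<alpha>) * P.prob {\<omega> \<in> space P. J \<omega> \<in> B}"
proof -
  have "P.prob {\<omega> \<in> space P. 1 < Y0 \<omega> \<and> J \<omega> \<in> B} = P.prob {\<omega> \<in> space P. J \<omega> \<in> B}"
    using AE_Y0_greater_1 events_Y0_greater_J[OF B] measurable_sets[OF measurable_J B]
    by (intro measure_eq_AE) (auto simp: Int_def conj_commute)
  then show ?thesis
    using assms prob_Y0_greater_J[OF assms] prob_Y0_greater_J[OF order.refl B] measure_cev_polar[of s B]
    by simp
qed

lemma prob_Y0_greater: "s \<ge> 1 \<Longrightarrow> P.prob {\<omega> \<in> space P. s < Y0 \<omega>} = s powr (-\<alpha>)"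
  using prob_Y0_greater_J_eq_mult[of s "space (PiM {1..h} (\<lambda>_. borel))"] J_space
  by (simp add: P.prob_space)

lemma prob_Y0_J_indep:
  assumes A: "A \<in> sets borel" and B: "B \<in> sets (PiM {1..h} (\<lambda>_. borel))"
  shows "P.prob {\<omega> \<in> space P. Y0 \<omega> \<in> A \<and> J \<omega> \<in> B}
       = P.prob {\<omega> \<in> space P. Y0 \<omega> \<in> A} * P.prob {\<omega> \<in> space P. J \<omega> \<in> B}"
proof -
  let ?E = "{\<omega> \<in> space P. J \<omega> \<in> B}"
  have E: "?E \<in> P.events"
    using measurable_sets[OF measurable_J B] by (simp add: vimage_def Int_def conj_commute)
  have "P.prob {\<omega> \<in> space P. x < Y0 \<omega> \<and> \<omega> \<in> ?E} = P.prob ?E * P.prob {\<omega> \<in> space P. x < Y0 \<omega>}" for x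
  proof -
    have E_x: "{\<omega> \<in> space P. x < Y0 \<omega> \<and> \<omega> \<in> ?E} = {\<omega> \<in> space P. x < Y0 \<omega> \<and> J \<omega> \<in> B}"
      by auto
    show ?thesis
    proof (cases "x \<ge> 1")
      case True
      then show ?thesis using prob_Y0_greater_J_eq_mult[OF True B] prob_Y0_greater[OF True] E_x by simp
    next
      case False
      from AE_Y0_greater_1 have "AE \<omega> in P. x < Y0 \<omega>" by eventually_elim (use False in auto)
      then have "P.prob {\<omega> \<in> space P. x < Y0 \<omega> \<and> J \<omega> \<in> B} = P.prob ?E"
        and "P.prob {\<omega> \<in> space P. x < Y0 \<omega>} = P.prob (space P)"
        using E events_Y0_greater_J[OF B, of x] measurable_sets[OF measurable_Y0, of "{x<..}"]
        by (auto intro!: measure_eq_AE simp: Int_def conj_commute)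
      then show ?thesis using E_x by (simp add: P.prob_space)
    qed
  qed
  from P.prob_vimage_Int_eq_mult_of_greaterThan[OF measurable_Y0 E this A]
  moreover have "{\<omega> \<in> space P. Y0 \<omega> \<in> A \<and> \<omega> \<in> ?E} = {\<omega> \<in> space P. Y0 \<omega> \<in> A \<and> J \<omega> \<in> B}"
    by auto
  ultimately show ?thesis by simp
qed

lemma AE_Y_eq_Y0_powr_J:
  "AE \<omega> in P. 1 \<le> Y0 \<omega> \<and> (\<forall>i\<in>{1..h}. Y i \<omega> = Y0 \<omega> powr \<kappa> i * J \<omega> i)"
  using AE_Y0_greater_1
proof eventually_elim
  case (elim \<omega>)
  then have "Y0 \<omega> powr \<kappa> i * (Y0 \<omega> powr (-\<kappa> i) * Y i \<omega>) = Y i \<omega>" for i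
    by (simp add: powr_minus field_simps)
  with elim show ?case by (simp add: J_def)
qed

end

theorem mainTheorem4:
  fixes h :: nat and \<alpha> :: real and \<kappa> :: "nat \<Rightarrow> real"
    and \<nu> :: "(ereal \<times> (nat \<Rightarrow> ereal)) measure"
    and P :: "'a measure" and Y0 :: "'a \<Rightarrow> real" and Y :: "nat \<Rightarrow> 'a \<Rightarrow> real"
  assumes h_pos: "h \<ge> 1"
    and alpha_pos: "\<alpha> > 0"
    and nu_sets: "sets \<nu> = sets (cev_space h)"
    and nu_support: "emeasure \<nu> {p \<in> space \<nu>. fst p \<le> 0} = 0"
    and nu_radon: "\<And>\<epsilon>. \<epsilon> > 0 \<Longrightarrow> emeasure \<nu> {p \<in> space \<nu>. ereal \<epsilon> \<le> fst p} < \<infinity>"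
    and nu_nonzero: "emeasure \<nu> (space \<nu>) \<noteq> 0"
    and nu_homog: "\<And>t y0 y. t > 0 \<Longrightarrow> y0 > 0 \<Longrightarrow>
        emeasure \<nu> (cev_rect h (t * y0) (\<lambda>i. t powr \<kappa> i * y i))
          = ennreal (t powr (-\<alpha>)) * emeasure \<nu> (cev_rect h y0 y)"
    and nu_prob: "emeasure \<nu> (cev_unit_part h) = 1"
    and P_prob: "prob_space P"
    and Y0_rv: "Y0 \<in> borel_measurable P"
    and Y_rv: "\<And>i. i \<in> {1..h} \<Longrightarrow> Y i \<in> borel_measurable P"
    and Y_distr: "\<And>A. A \<in> sets (real_vec_space h) \<Longrightarrow>
        emeasure P {\<omega> \<in> space P. (Y0 \<omega>, \<lambda>i\<in>{1..h}. Y i \<omega>) \<in> A}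
          = emeasure \<nu> {p \<in> cev_unit_part h. cev_real h p \<in> A}"
  shows "(\<forall>y\<ge>1. measure P {\<omega> \<in> space P. Y0 \<omega> > y} = y powr (-\<alpha>))
       \<and> (\<forall>A \<in> sets (borel :: real measure). \<forall>B \<in> sets (PiM {1..h} (\<lambda>_. (borel :: real measure))).
            measure P {\<omega> \<in> space P. Y0 \<omega> \<in> A \<and>
                         (\<lambda>i\<in>{1..h}. Y0 \<omega> powr (-\<kappa> i) * Y i \<omega>) \<in> B}
          = measure P {\<omega> \<in> space P. Y0 \<omega> \<in> A}
            * measure P {\<omega> \<in> space P. (\<lambda>i\<in>{1..h}. Y0 \<omega> powr (-\<kappa> i) * Y i \<omega>) \<in> B})
       \<and> (AE \<omega> in P. Y0 \<omega> \<ge> 1 \<and>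
           (\<forall>i\<in>{1..h}. Y i \<omega> = Y0 \<omega> powr \<kappa> i * (Y0 \<omega> powr (-\<kappa> i) * Y i \<omega>)))"
proof -
  interpret cev_spectral_vector h \<alpha> \<kappa> \<nu> P Y0 Y
    by (intro cev_spectral_vector.intro homogeneous_cev_measure.intro cev_spectral_vector_axioms.intro P_prob)
      (fact assms)+
  show ?thesis
    using prob_Y0_greater prob_Y0_J_indep AE_Y_eq_Y0_powr_J unfolding J_def by auto
qed

end
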